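(* For all $x$ with $|x|<1/4$, \[ \sum_{n=0}^\infty\binom{2n}{n}H_{2n+1}x^n=\frac1{\sqrt{1-4x}}\ln\Bigl(\frac{1+\sqrt{1-4x}}{2(1-4x)}\Bigr)+\frac{\arcsin(2\sqrt x)}{2\sqrt x}, \] \[ \sum_{n=0}^\infty(-1)^n\binom{2n}{n}H_{2n+1}x^n=\frac1{\sqrt{1+4x}}\ln\Bigl(\frac{1+\sqrt{1+4x}}{2(1+4x)}\Bigr)+\frac{\ln\bigl(2\sqrt x+\sqrt{1+4x}\bigr)}{2\sqrt x}. \]
   Context: $H_n=\sum_{j=1}^n\frac1j$ is the $n$th harmonic number. The functions $\frac{\arcsin(2\sqrt x)}{2\sqrt x}=\sum_{n\ge0}\binom{2n}{n}\frac{x^n}{2n+1}$ and $\frac{\ln(2\sqrt x+\sqrt{1+4x})}{2\sqrt x}=\sum_{n\ge0}(-1)^n\binom{2n}{n}\frac{x^n}{2n+1}$ are understood as these even analytic functions of $\sqrt x$ (principal branches for $x<0$, value $1$ at $x=0$). *)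

theory Defs
  imports "HOL-Analysis.Analysis"
begin

text \<open>The even analytic function of sqrt x that equals arcsin(2 sqrt x)/(2 sqrt x),
  with principal branches for x < 0 (where it becomes ln(2 sqrt(-x) + sqrt(1-4x))/(2 sqrt(-x)))
  and value 1 at x = 0.\<close>
definition asin_fun :: "real \<Rightarrow> real" where
  "asin_fun x =
     (if x > 0 then arcsin (2 * sqrt x) / (2 * sqrt x)
      else if x = 0 then 1
      else ln (2 * sqrt (-x) + sqrt (1 - 4 * x)) / (2 * sqrt (-x)))"

text \<open>The even analytic function of sqrt x that equals ln(2 sqrt x + sqrt(1+4x))/(2 sqrt x),
  with principal branches for x < 0 (where it becomes arcsin(2 sqrt(-x))/(2 sqrt(-x)))
  and value 1 at x = 0.\<close>
definition asinh_fun :: "real \<Rightarrow> real" where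
  "asinh_fun x =
     (if x > 0 then ln (2 * sqrt x + sqrt (1 + 4 * x)) / (2 * sqrt x)
      else if x = 0 then 1
      else arcsin (2 * sqrt (-x)) / (2 * sqrt (-x)))"

end

theory Submission
  imports Defs
begin

(* Split H(2n+1) = H(2n) + 1/(2n+1).  By the generalised binomial theorem,
   C(x) = sum binom(2n,n) x^n = 1/sqrt(1-4x).

   The series S(x) = sum binom(2n,n)/(2n+1) x^n satisfies 2x S' + S = C, so u S(u^2) and
   u S(-u^2) have derivatives 1/sqrt(1-4u^2) and 1/sqrt(1+4u^2); hence they equal
   arcsin(2u)/2 and arsinh(2u)/2, which gives asin_fun.

   By the recurrence (n+1) binom(2n+2,n+1) = (4n+2) binom(2n,n), the series
   A(x) = sum binom(2n,n) H(2n) x^n solves (1-4x) A' - 2A = 2C + (C-1)/(2x).  As sqrt(1-4x)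
   is an integrating factor of the left-hand side, sqrt(1-4x) A(x) is the antiderivative
   vanishing at 0 of an explicit function, namely ln((1 + sqrt(1-4x)) / (2(1-4x))).
   The alternating identity is the first one at -x. *)

lemma conv_radius_mono:
  fixes f g :: "nat \<Rightarrow> 'a :: {banach, real_normed_div_algebra}"
  assumes "\<And>n. norm (f n) \<le> norm (g n)"
  shows "conv_radius g \<le> conv_radius f"
proof (rule conv_radius_geI_ex')
  fix r :: real assume "0 < r" "ereal r < conv_radius g"
  then have "summable (\<lambda>n. norm (g n * of_real r ^ n))"
    by (intro abs_summable_in_conv_radius) simp
  then show "summable (\<lambda>n. f n * of_real r ^ n)"
    by (rule summable_comparison_test') (simp add: norm_mult mult_right_mono assms)
qed

lemma conv_radius_diffs:
  fixes a :: "nat \<Rightarrow> 'a :: {banach, real_normed_field}"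
  shows "conv_radius a \<le> conv_radius (diffs a)"
proof -
  have "fps_deriv (Abs_fps a) = Abs_fps (diffs a)"
    by (simp add: fps_eq_iff diffs_def)
  then show ?thesis
    using fps_conv_radius_deriv[of "Abs_fps a"] by (simp add: fps_conv_radius_def)
qed

lemma sums_of_nat_mult_powser:
  fixes a :: "nat \<Rightarrow> 'a :: {banach, real_normed_field}"
  assumes "ereal (norm x) < conv_radius a"
  shows "(\<lambda>n. of_nat n * a n * x ^ n) sums (x * (\<Sum>n. diffs a n * x ^ n))"
proof -
  have "(\<lambda>n. diffs a n * x ^ n) sums (\<Sum>n. diffs a n * x ^ n)"
    using assms conv_radius_diffs[of a]
    by (intro summable_sums summable_in_conv_radius) simp
  then have "(\<lambda>n. x * (diffs a n * x ^ n)) sums (x * (\<Sum>n. diffs a n * x ^ n))"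
    by (rule sums_mult)
  then have "(\<lambda>n. of_nat (Suc n) * a (Suc n) * x ^ Suc n) sums (x * (\<Sum>n. diffs a n * x ^ n))"
    by (simp add: diffs_def algebra_simps)
  then show ?thesis
    by (subst (asm) sums_Suc_iff) simp
qed

lemma has_field_derivative_mult_powser_square:
  fixes a :: "nat \<Rightarrow> real"
  assumes "ereal \<bar>c * u^2\<bar> < conv_radius a"
  shows "((\<lambda>u. u * (\<Sum>n. a n * (c * u^2) ^ n)) has_field_derivative
           (\<Sum>n. a n * (c * u^2) ^ n) + 2 * (c * u^2) * (\<Sum>n. diffs a n * (c * u^2) ^ n)) (at u)"
proof -
  have "((\<lambda>y. \<Sum>n. a n * y ^ n) has_field_derivative (\<Sum>n. diffs a n * (c * u^2) ^ n))
          (at (c * u^2))"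
    using assms by (intro has_field_derivative_powser) simp
  then have "((\<lambda>u. \<Sum>n. a n * (c * u^2) ^ n) has_field_derivative
               (\<Sum>n. diffs a n * (c * u^2) ^ n) * (c * (2 * u))) (at u)"
    by (rule DERIV_chain2) (auto intro!: derivative_eq_intros)
  from DERIV_mult[OF DERIV_ident this] show ?thesis
    by (rule DERIV_cong) (simp add: algebra_simps power2_eq_square)
qed

lemma same_derivative_eq_on_convex:
  fixes f g :: "'a :: real_normed_field \<Rightarrow> 'a"
  assumes "convex S"
    and "\<And>t. t \<in> S \<Longrightarrow> (f has_field_derivative h t) (at t)"
    and "\<And>t. t \<in> S \<Longrightarrow> (g has_field_derivative h t) (at t)"
    and "c \<in> S" "f c = g c" "x \<in> S"
  shows "f x = g x"
proof -
  have "\<exists>k. \<forall>t\<in>S. f t - g t = k"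
  proof (rule has_field_derivative_zero_constant[OF \<open>convex S\<close>])
    fix t assume "t \<in> S"
    then have "((\<lambda>t. f t - g t) has_field_derivative h t - h t) (at t)"
      by (intro DERIV_diff assms(2,3))
    then show "((\<lambda>t. f t - g t) has_field_derivative 0) (at t within S)"
      by (simp add: has_field_derivative_at_within)
  qed
  then obtain k where "\<forall>t\<in>S. f t - g t = k" ..
  then show ?thesis
    using assms(4-6) by (metis eq_iff_diff_eq_0)
qed

lemma has_field_derivative_sqrt_mult:
  assumes "(y has_field_derivative y') (at t)" "4 * t < 1"
  shows "((\<lambda>t. sqrt (1 - 4*t) * y t) has_field_derivative
           ((1 - 4*t) * y' - 2 * y t) / sqrt (1 - 4*t)) (at t)"
proof -
  have "sqrt (1 - 4*t) > 0" "sqrt (1 - 4*t) * sqrt (1 - 4*t) = 1 - 4*t"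
    using assms(2) by auto
  then show ?thesis
    using assms by (auto intro!: derivative_eq_intros simp: field_simps)
qed

lemma harm_le: "harm n \<le> real n"
proof -
  have "harm n \<le> real (card {..<n}) * 1"
    unfolding harm_altdef by (rule sum_bounded_above) (simp add: inverse_le_1_iff)
  then show ?thesis
    by simp
qed

lemma Suc_times_gbinomial_Suc:
  "of_nat (Suc k) * (a gchoose Suc k) = (a - of_nat k) * (a gchoose k)"
  unfolding gbinomial_absorption gbinomial_absorb_comp ..

section \<open>Central binomial coefficients\<close>

definition central_binom :: "nat \<Rightarrow> real" where
  "central_binom n = real ((2*n) choose n)"

lemma central_binom_nonneg: "central_binom n \<ge> 0"
  by (simp add: central_binom_def)

lemma fact_mult_central_binom: "fact n * fact n * central_binom n = fact (2*n)"
proof -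
  have "fact n * fact n * ((2*n) choose n) = fact (2*n)"
    using binomial_fact_lemma[of n "2*n"] by simp
  then show ?thesis
    unfolding central_binom_def by (metis of_nat_fact of_nat_mult)
qed

lemma central_binom_Suc:
  "real (Suc n) * central_binom (Suc n) = (4 * real n + 2) * central_binom n"
proof -
  have "fact n * fact n * (real (Suc n) * (real (Suc n) * central_binom (Suc n)))
          = fact (2 * Suc n)"
    using fact_mult_central_binom[of "Suc n"] by (simp only: fact_Suc of_nat_fact ac_simps)
  also have "\<dots> = (2 * real n + 2) * (2 * real n + 1) * fact (2*n)"
    by (simp add: algebra_simps)
  also have "\<dots> = fact n * fact n * (real (Suc n) * ((4 * real n + 2) * central_binom n))"
    unfolding fact_mult_central_binom[of n, symmetric] by (simp add: algebra_simps)
  finally show ?thesis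
    by simp
qed

lemma gbinomial_minus_half: "((-1/2) gchoose n) * (-4) ^ n = central_binom n"
proof (induction n)
  case 0
  then show ?case
    by (simp add: central_binom_def)
next
  case (Suc n)
  have "real (Suc n) * (((-1/2) gchoose Suc n) * (-4) ^ Suc n)
          = (4 * real n + 2) * (((-1/2) gchoose n) * (-4) ^ n)"
    by (simp only: mult.assoc[symmetric] Suc_times_gbinomial_Suc) (simp add: algebra_simps)
  also have "\<dots> = real (Suc n) * central_binom (Suc n)"
    by (simp only: Suc.IH central_binom_Suc)
  finally show ?case
    by (subst (asm) mult_cancel_left) simp
qed

lemma central_binom_sums:
  assumes "\<bar>x\<bar> < 1/4"
  shows "(\<lambda>n. central_binom n * x ^ n) sums (1 / sqrt (1 - 4*x))"
proof -
  have "(\<lambda>n. ((-1/2) gchoose n) * (-4*x) ^ n) sums (1 + -4*x) powr (-1/2)"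
    using assms by (intro gen_binomial_real) auto
  also have "(1 + -4*x) powr (-1/2) = 1 / sqrt (1 - 4*x)"
    using assms by (simp add: powr_minus_divide powr_half_sqrt)
  finally show ?thesis
    by (simp only: power_mult_distrib mult.assoc[symmetric] gbinomial_minus_half)
qed

lemma conv_radius_central_binom: "conv_radius central_binom \<ge> ereal (1/4)"
proof (rule conv_radius_geI_ex')
  fix r :: real assume "0 < r" "ereal r < ereal (1/4)"
  then show "summable (\<lambda>n. central_binom n * of_real r ^ n)"
    using central_binom_sums[of r] by (simp add: sums_iff)
qed

lemma central_binom_Suc_sums:
  assumes "\<bar>x\<bar> < 1/4"
  shows "(\<lambda>n. central_binom (Suc n) * x ^ n) sums (4 / (sqrt (1 - 4*x) * (1 + sqrt (1 - 4*x))))"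
proof (cases "x = 0")
  case True
  then show ?thesis
    using powser_sums_zero[of "\<lambda>n. central_binom (Suc n)"] by (simp add: central_binom_def)
next
  case False
  define s where "s = sqrt (1 - 4*x)"
  have s: "s > 0" "s \<noteq> 1" "x = (1 - s) * (1 + s) / 4"
    using assms False by (auto simp: s_def algebra_simps)
  have "(\<lambda>n. central_binom (Suc n) * x ^ Suc n) sums (1 / s - central_binom 0 * x ^ 0)"
    using central_binom_sums[OF assms] unfolding s_def by (subst sums_Suc_iff) simp
  then have "(\<lambda>n. central_binom (Suc n) * x ^ Suc n / x) sums ((1 / s - 1) / x)"
    by (intro sums_divide) (simp add: central_binom_def)
  moreover have "(1 / s - 1) / x = 4 / (s * (1 + s))"
  proof -
    have "1 - s \<noteq> 0" "s \<noteq> 0"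
      using s by auto
    then have "(1 / s - 1) / x = ((1 - s) * 4) / ((1 - s) * (s * (1 + s)))"
      by (subst s(3)) (simp add: field_simps)
    also have "\<dots> = 4 / (s * (1 + s))"
      using \<open>1 - s \<noteq> 0\<close> by (rule mult_divide_mult_cancel_left)
    finally show ?thesis .
  qed
  ultimately show ?thesis
    using False by (simp add: s_def)
qed

section \<open>The series of binom(2n,n)/(2n+1)\<close>

definition asin_fun_coeff :: "nat \<Rightarrow> real" where
  "asin_fun_coeff n = central_binom n / (2 * real n + 1)"

lemma conv_radius_asin_fun_coeff: "conv_radius asin_fun_coeff \<ge> ereal (1/4)"
proof (rule order_trans[OF conv_radius_central_binom conv_radius_mono])
  fix n
  have "central_binom n / (2 * real n + 1) \<le> central_binom n / 1"
    by (intro divide_left_mono central_binom_nonneg) auto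
  then show "norm (asin_fun_coeff n) \<le> norm (central_binom n)"
    using central_binom_nonneg[of n] by (simp add: asin_fun_coeff_def)
qed

lemma asin_fun_coeff_ode:
  assumes "\<bar>t\<bar> < 1/4"
  shows "2 * t * (\<Sum>n. diffs asin_fun_coeff n * t ^ n) + (\<Sum>n. asin_fun_coeff n * t ^ n)
           = 1 / sqrt (1 - 4*t)"
proof -
  have "ereal (norm t) < conv_radius asin_fun_coeff"
    by (rule order_less_le_trans[OF _ conv_radius_asin_fun_coeff]) (use assms in simp)
  then have "(\<lambda>n. 2 * (of_nat n * asin_fun_coeff n * t ^ n) + asin_fun_coeff n * t ^ n) sums
               (2 * (t * (\<Sum>n. diffs asin_fun_coeff n * t ^ n)) + (\<Sum>n. asin_fun_coeff n * t ^ n))"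
    by (intro sums_add sums_mult sums_of_nat_mult_powser summable_sums summable_in_conv_radius)
  moreover have "2 * (of_nat n * asin_fun_coeff n * t ^ n) + asin_fun_coeff n * t ^ n
                   = central_binom n * t ^ n" for n
  proof -
    have "(2 * real n + 1) * asin_fun_coeff n = central_binom n"
      unfolding asin_fun_coeff_def by (simp add: add_pos_nonneg)
    moreover have "2 * (of_nat n * asin_fun_coeff n * t ^ n) + asin_fun_coeff n * t ^ n
                     = (2 * real n + 1) * asin_fun_coeff n * t ^ n"
      by (simp add: algebra_simps)
    ultimately show ?thesis
      by simp
  qed
  ultimately have "(\<lambda>n. central_binom n * t ^ n) sums
      (2 * (t * (\<Sum>n. diffs asin_fun_coeff n * t ^ n)) + (\<Sum>n. asin_fun_coeff n * t ^ n))"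
    by simp
  from sums_unique2[OF this central_binom_sums[OF assms]] show ?thesis
    by (simp only: mult.assoc)
qed

lemma asin_fun_coeff_deriv:
  assumes "\<bar>c * u^2\<bar> < 1/4"
  shows "((\<lambda>u. u * (\<Sum>n. asin_fun_coeff n * (c * u^2) ^ n)) has_field_derivative
           1 / sqrt (1 - 4 * (c * u^2))) (at u)"
proof -
  have "ereal \<bar>c * u^2\<bar> < conv_radius asin_fun_coeff"
    by (rule order_less_le_trans[OF _ conv_radius_asin_fun_coeff]) (use assms in simp)
  from has_field_derivative_mult_powser_square[OF this] show ?thesis
    by (rule DERIV_cong) (use asin_fun_coeff_ode[OF assms] in \<open>simp add: algebra_simps\<close>)
qed

lemma asin_fun_coeff_arcsin:
  assumes "\<bar>u\<bar> < 1/2"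
  shows "u * (\<Sum>n. asin_fun_coeff n * (u^2) ^ n) = arcsin (2*u) / 2"
proof (rule same_derivative_eq_on_convex[where S = "{-1/2<..<1/2}" and c = 0
      and f = "\<lambda>u. u * (\<Sum>n. asin_fun_coeff n * (u^2) ^ n)" and g = "\<lambda>u. arcsin (2*u) / 2"
      and h = "\<lambda>v. 1 / sqrt (1 - 4 * v^2)"])
  fix v :: real assume "v \<in> {-1/2<..<1/2}"
  then have v: "\<bar>v\<bar> < 1/2"
    by auto
  then have "\<bar>v^2\<bar> < 1/4"
    using power_strict_mono[OF v abs_ge_zero, of 2] by (simp add: power_divide)
  with asin_fun_coeff_deriv[of 1 v]
  show "((\<lambda>u. u * (\<Sum>n. asin_fun_coeff n * (u^2) ^ n)) has_field_derivative
          1 / sqrt (1 - 4 * v^2)) (at v)"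
    by simp
  show "((\<lambda>u. arcsin (2*u) / 2) has_field_derivative 1 / sqrt (1 - 4 * v^2)) (at v)"
    using v by (auto intro!: derivative_eq_intros simp: power_mult_distrib divide_simps)
qed (use assms in auto)

lemma asin_fun_coeff_arsinh:
  assumes "\<bar>u\<bar> < 1/2"
  shows "u * (\<Sum>n. asin_fun_coeff n * (-(u^2)) ^ n) = arsinh (2*u) / 2"
proof (rule same_derivative_eq_on_convex[where S = "{-1/2<..<1/2}" and c = 0
      and f = "\<lambda>u. u * (\<Sum>n. asin_fun_coeff n * (-(u^2)) ^ n)" and g = "\<lambda>u. arsinh (2*u) / 2"
      and h = "\<lambda>v. 1 / sqrt (1 + 4 * v^2)"])
  fix v :: real assume "v \<in> {-1/2<..<1/2}"
  then have v: "\<bar>v\<bar> < 1/2"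
    by auto
  then have "\<bar>v^2\<bar> < 1/4"
    using power_strict_mono[OF v abs_ge_zero, of 2] by (simp add: power_divide)
  with asin_fun_coeff_deriv[of "-1" v]
  show "((\<lambda>u. u * (\<Sum>n. asin_fun_coeff n * (-(u^2)) ^ n)) has_field_derivative
          1 / sqrt (1 + 4 * v^2)) (at v)"
    by simp
  have "((\<lambda>u. arsinh (2*u)) has_field_derivative 1 / sqrt ((2 * v)^2 + 1) * 2) (at v)"
    by (rule DERIV_chain2[OF arsinh_real_has_field_derivative]) (auto intro!: derivative_eq_intros)
  from DERIV_cdivide[OF this, of 2]
  show "((\<lambda>u. arsinh (2*u) / 2) has_field_derivative 1 / sqrt (1 + 4 * v^2)) (at v)"
    by (simp add: power_mult_distrib add.commute)
qed (use assms in auto)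

lemma suminf_asin_fun_coeff:
  assumes "\<bar>x\<bar> < 1/4"
  shows "(\<Sum>n. asin_fun_coeff n * x ^ n) = asin_fun x"
proof (cases x "0::real" rule: linorder_cases)
  case less
  define u where "u = sqrt (-x)"
  have "sqrt (-x) < 1/2"
    using less assms by (intro real_less_lsqrt) (auto simp: power_divide)
  then have u: "u > 0" "\<bar>u\<bar> < 1/2" "-(u^2) = x"
    using less by (auto simp: u_def)
  have "sqrt ((2*u)^2 + 1) = sqrt (1 - 4*x)"
    using u(3) by (auto simp: power_mult_distrib)
  then show ?thesis
    using asin_fun_coeff_arsinh[OF u(2)] u less
    by (auto simp: asin_fun_def arsinh_real_def u_def field_simps)
next
  case equal
  have "(\<Sum>n. asin_fun_coeff n * 0 ^ n) = asin_fun_coeff 0"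
    by (rule powser_zero)
  with equal show ?thesis
    by (simp add: asin_fun_def asin_fun_coeff_def central_binom_def)
next
  case greater
  define u where "u = sqrt x"
  have "sqrt x < 1/2"
    using greater assms by (intro real_less_lsqrt) (auto simp: power_divide)
  then have u: "u > 0" "\<bar>u\<bar> < 1/2" "u^2 = x"
    using greater by (auto simp: u_def)
  then show ?thesis
    using asin_fun_coeff_arcsin[OF u(2)] greater
    by (auto simp: asin_fun_def u_def field_simps)
qed

lemma asin_fun_coeff_sums:
  assumes "\<bar>x\<bar> < 1/4"
  shows "(\<lambda>n. asin_fun_coeff n * x ^ n) sums asin_fun x"
proof -
  have "ereal (norm x) < conv_radius asin_fun_coeff"
    by (rule order_less_le_trans[OF _ conv_radius_asin_fun_coeff]) (use assms in simp)
  then have "(\<lambda>n. asin_fun_coeff n * x ^ n) sums (\<Sum>n. asin_fun_coeff n * x ^ n)"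
    by (intro summable_sums summable_in_conv_radius)
  then show ?thesis
    by (simp only: suminf_asin_fun_coeff[OF assms])
qed

section \<open>The series of binom(2n,n) H(2n)\<close>

definition central_binom_harm :: "nat \<Rightarrow> real" where
  "central_binom_harm n = central_binom n * harm (2*n)"

lemma diffs_central_binom_harm:
  "diffs central_binom_harm n
     = (4 * real n + 2) * central_binom_harm n + 2 * central_binom n + central_binom (Suc n) / 2"
proof -
  have harm: "harm (2 * Suc n) = harm (2*n) + 1 / (2 * real n + 1) + 1 / (2 * real n + 2)"
    by (simp add: harm_Suc inverse_eq_divide algebra_simps)
  have "diffs central_binom_harm n = real (Suc n) * central_binom (Suc n) * harm (2 * Suc n)"
    by (simp add: diffs_def central_binom_harm_def)
  also have "\<dots> = (4 * real n + 2) * central_binom n * harm (2 * Suc n)"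
    by (simp only: central_binom_Suc)
  also have "\<dots> = (4 * real n + 2) * central_binom_harm n
                    + (4 * real n + 2) / (2 * real n + 1) * central_binom n
                    + (4 * real n + 2) * central_binom n / (2 * real n + 2)"
    unfolding harm central_binom_harm_def by (simp add: ring_distribs)
  also have "(4 * real n + 2) / (2 * real n + 1) = 2"
    by (simp add: divide_eq_eq)
  also have "(4 * real n + 2) * central_binom n / (2 * real n + 2)
               = real (Suc n) * central_binom (Suc n) / (2 * real (Suc n))"
    by (simp only: central_binom_Suc) (simp add: algebra_simps)
  also have "\<dots> = central_binom (Suc n) / 2"
    by (simp del: of_nat_Suc)
  finally show ?thesis .
qed

lemma conv_radius_central_binom_harm: "conv_radius central_binom_harm \<ge> ereal (1/4)"
proof (rule order_trans[OF conv_radius_central_binom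
                          order_trans[OF conv_radius_diffs conv_radius_mono]])
  fix n
  have "harm (2*n) \<le> 4 * real n + 2"
    using harm_le[of "2*n"] by simp
  then have "central_binom n * harm (2*n) \<le> (4 * real n + 2) * central_binom n"
    using central_binom_nonneg[of n] by (simp add: mult_left_mono mult.commute)
  then show "norm (central_binom_harm n) \<le> norm (diffs central_binom n)"
    using central_binom_nonneg[of n] harm_nonneg[of "2*n", where 'a = real]
    unfolding central_binom_harm_def diffs_def central_binom_Suc by simp
qed

lemma central_binom_harm_ode:
  assumes "\<bar>t\<bar> < 1/4"
  shows "(1 - 4*t) * (\<Sum>n. diffs central_binom_harm n * t ^ n)
             - 2 * (\<Sum>n. central_binom_harm n * t ^ n)
           = 2 / sqrt (1 - 4*t) + 2 / (sqrt (1 - 4*t) * (1 + sqrt (1 - 4*t)))"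
proof -
  have "ereal (norm t) < conv_radius central_binom_harm"
    by (rule order_less_le_trans[OF _ conv_radius_central_binom_harm]) (use assms in simp)
  then have "(\<lambda>n. diffs central_binom_harm n * t ^ n - 4 * (of_nat n * central_binom_harm n * t ^ n)
                  - 2 * (central_binom_harm n * t ^ n)) sums
               ((\<Sum>n. diffs central_binom_harm n * t ^ n)
                  - 4 * (t * (\<Sum>n. diffs central_binom_harm n * t ^ n))
                  - 2 * (\<Sum>n. central_binom_harm n * t ^ n))"
    using conv_radius_diffs[of central_binom_harm]
    by (intro sums_diff sums_mult sums_of_nat_mult_powser summable_sums summable_in_conv_radius) auto
  also have "(\<lambda>n. diffs central_binom_harm n * t ^ n - 4 * (of_nat n * central_binom_harm n * t ^ n)
                  - 2 * (central_binom_harm n * t ^ n))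
               = (\<lambda>n. 2 * (central_binom n * t ^ n) + central_binom (Suc n) * t ^ n / 2)"
    by (rule ext) (simp add: diffs_central_binom_harm algebra_simps)
  finally have "(\<lambda>n. 2 * (central_binom n * t ^ n) + central_binom (Suc n) * t ^ n / 2) sums
      ((1 - 4*t) * (\<Sum>n. diffs central_binom_harm n * t ^ n) - 2 * (\<Sum>n. central_binom_harm n * t ^ n))"
    by (simp add: algebra_simps)
  moreover have "(\<lambda>n. 2 * (central_binom n * t ^ n) + central_binom (Suc n) * t ^ n / 2) sums
      (2 * (1 / sqrt (1 - 4*t)) + 4 / (sqrt (1 - 4*t) * (1 + sqrt (1 - 4*t))) / 2)"
    by (intro sums_add sums_mult sums_divide central_binom_sums central_binom_Suc_sums assms)
  ultimately show ?thesis
    by (simp add: sums_unique2)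
qed

lemma sqrt_mult_central_binom_harm_deriv:
  assumes "\<bar>t\<bar> < 1/4"
  shows "((\<lambda>t. sqrt (1 - 4*t) * (\<Sum>n. central_binom_harm n * t ^ n)) has_field_derivative
           4 / (1 - 4*t) - 2 / (sqrt (1 - 4*t) * (1 + sqrt (1 - 4*t)))) (at t)"
proof -
  define s where "s = sqrt (1 - 4*t)"
  have s: "s > 0" "s * s = 1 - 4*t"
    using assms by (auto simp: s_def)
  have "ereal (norm t) < conv_radius central_binom_harm"
    by (rule order_less_le_trans[OF _ conv_radius_central_binom_harm]) (use assms in simp)
  then have "((\<lambda>t. sqrt (1 - 4*t) * (\<Sum>n. central_binom_harm n * t ^ n)) has_field_derivative
               ((1 - 4*t) * (\<Sum>n. diffs central_binom_harm n * t ^ n)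
                 - 2 * (\<Sum>n. central_binom_harm n * t ^ n)) / sqrt (1 - 4*t)) (at t)"
    using assms by (intro has_field_derivative_sqrt_mult has_field_derivative_powser) auto
  also have "((1 - 4*t) * (\<Sum>n. diffs central_binom_harm n * t ^ n)
                 - 2 * (\<Sum>n. central_binom_harm n * t ^ n)) / sqrt (1 - 4*t)
               = (2 / s + 2 / (s * (1 + s))) / s"
    unfolding central_binom_harm_ode[OF assms] s_def ..
  also have "\<dots> = 4 / (s * s) - 2 / (s * (1 + s))"
  proof -
    have "s \<noteq> 0" "1 + s \<noteq> 0"
      using s(1) by auto
    then show ?thesis
      by (simp add: divide_simps)
  qed
  also have "\<dots> = 4 / (1 - 4*t) - 2 / (s * (1 + s))"
    unfolding s(2) ..
  finally show ?thesis
    by (simp only: s_def)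
qed

lemma sqrt_mult_central_binom_harm:
  assumes "\<bar>x\<bar> < 1/4"
  shows "sqrt (1 - 4*x) * (\<Sum>n. central_binom_harm n * x ^ n)
           = ln (1 + sqrt (1 - 4*x)) - ln (2 * (1 - 4*x))"
proof (rule same_derivative_eq_on_convex[where S = "{-1/4<..<1/4}" and c = 0
      and f = "\<lambda>t. sqrt (1 - 4*t) * (\<Sum>n. central_binom_harm n * t ^ n)"
      and g = "\<lambda>t. ln (1 + sqrt (1 - 4*t)) - ln (2 * (1 - 4*t))"
      and h = "\<lambda>t. 4 / (1 - 4*t) - 2 / (sqrt (1 - 4*t) * (1 + sqrt (1 - 4*t)))"])
  fix t :: real assume "t \<in> {-1/4<..<1/4}"
  then have t: "\<bar>t\<bar> < 1/4" "4 * t < 1"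
    by auto
  then show "((\<lambda>t. sqrt (1 - 4*t) * (\<Sum>n. central_binom_harm n * t ^ n)) has_field_derivative
                4 / (1 - 4*t) - 2 / (sqrt (1 - 4*t) * (1 + sqrt (1 - 4*t)))) (at t)"
    by (intro sqrt_mult_central_binom_harm_deriv)
  have "sqrt (1 - 4*t) > 0"
    using t by simp
  with t show "((\<lambda>t. ln (1 + sqrt (1 - 4*t)) - ln (2 * (1 - 4*t))) has_field_derivative
                4 / (1 - 4*t) - 2 / (sqrt (1 - 4*t) * (1 + sqrt (1 - 4*t)))) (at t)"
    by (auto intro!: derivative_eq_intros add_pos_nonneg simp: field_simps)
next
  have "(\<Sum>n. central_binom_harm n * 0 ^ n) = central_binom_harm 0"
    by (rule powser_zero)
  then show "sqrt (1 - 4*0) * (\<Sum>n. central_binom_harm n * 0 ^ n)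
               = ln (1 + sqrt (1 - 4*0)) - ln (2 * (1 - 4*0))"
    by (simp add: central_binom_harm_def harm_def)
qed (use assms in auto)

lemma central_binom_harm_sums:
  assumes "\<bar>x\<bar> < 1/4"
  shows "(\<lambda>n. central_binom_harm n * x ^ n) sums
           (1 / sqrt (1 - 4*x) * ln ((1 + sqrt (1 - 4*x)) / (2 * (1 - 4*x))))"
proof -
  have "ereal (norm x) < conv_radius central_binom_harm"
    by (rule order_less_le_trans[OF _ conv_radius_central_binom_harm]) (use assms in simp)
  then have "(\<lambda>n. central_binom_harm n * x ^ n) sums (\<Sum>n. central_binom_harm n * x ^ n)"
    by (intro summable_sums summable_in_conv_radius)
  moreover have "sqrt (1 - 4*x) > 0"
    using assms by simp
  then have "(\<Sum>n. central_binom_harm n * x ^ n)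
               = 1 / sqrt (1 - 4*x) * (ln (1 + sqrt (1 - 4*x)) - ln (2 * (1 - 4*x)))"
    using sqrt_mult_central_binom_harm[OF assms] by (simp add: field_simps)
  also have "ln (1 + sqrt (1 - 4*x)) - ln (2 * (1 - 4*x))
               = ln ((1 + sqrt (1 - 4*x)) / (2 * (1 - 4*x)))"
    using assms by (intro ln_divide_pos[symmetric] add_pos_nonneg) auto
  ultimately show ?thesis
    by simp
qed

lemma central_binom_harm_Suc_sums:
  assumes "\<bar>x\<bar> < 1/4"
  shows "(\<lambda>n. real ((2*n) choose n) * harm (2*n+1) * x ^ n) sums
           (1 / sqrt (1 - 4*x) * ln ((1 + sqrt (1 - 4*x)) / (2 * (1 - 4*x))) + asin_fun x)"
proof -
  have "central_binom_harm n * x ^ n + asin_fun_coeff n * x ^ n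
          = real ((2*n) choose n) * harm (2*n+1) * x ^ n" for n
    by (simp add: central_binom_harm_def asin_fun_coeff_def central_binom_def harm_Suc
                  inverse_eq_divide algebra_simps)
  with sums_add[OF central_binom_harm_sums[OF assms] asin_fun_coeff_sums[OF assms]]
  show ?thesis
    by simp
qed

lemma asin_fun_minus: "asin_fun (-x) = asinh_fun x"
  by (simp add: asin_fun_def asinh_fun_def)

theorem theorem20:
  fixes x :: real
  assumes "\<bar>x\<bar> < 1/4"
  shows "((\<lambda>n. real ((2*n) choose n) * harm (2*n+1) * x ^ n) sums
           (1 / sqrt (1 - 4*x) * ln ((1 + sqrt (1 - 4*x)) / (2 * (1 - 4*x))) + asin_fun x) \<and>
         (\<lambda>n. (-1) ^ n * real ((2*n) choose n) * harm (2*n+1) * x ^ n) sums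
           (1 / sqrt (1 + 4*x) * ln ((1 + sqrt (1 + 4*x)) / (2 * (1 + 4*x))) + asinh_fun x))"
proof
  show "(\<lambda>n. real ((2*n) choose n) * harm (2*n+1) * x ^ n) sums
          (1 / sqrt (1 - 4*x) * ln ((1 + sqrt (1 - 4*x)) / (2 * (1 - 4*x))) + asin_fun x)"
    using central_binom_harm_Suc_sums[OF assms] .
  have "\<bar>-x\<bar> < 1/4"
    using assms by simp
  from central_binom_harm_Suc_sums[OF this]
  show "(\<lambda>n. (-1) ^ n * real ((2*n) choose n) * harm (2*n+1) * x ^ n) sums
          (1 / sqrt (1 + 4*x) * ln ((1 + sqrt (1 + 4*x)) / (2 * (1 + 4*x))) + asinh_fun x)"
    by (simp add: asin_fun_minus power_minus[of x] mult_ac)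
qed

end
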